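(* Let $f:[0,1]\to\mathbb{R}$ with $f(0),f(1)\in\mathbb{Z}$ and let $n\in\mathbb{N}_+$. If $n\ge 3$, let also $\psi_n:[0,1]\to\mathbb{R}$ satisfy \[ \psi_n\left(\frac{k+1}{n}\right)-\psi_n\left(\frac{k}{n}\right)\ge \binom{n}{k}^{-1},\quad k=1,\dots,n-2. \] If $f$ is monotone decreasing on $[0,1/n]$ and on $[1-1/n,1]$, and (when $n\ge3$) $f(x)+\psi_n(x)$ is monotone decreasing on $[1/n,1-1/n]$, then $\widetilde{B}_n(f)$ is monotone decreasing on $[0,1]$.
   Context: For $n\in\mathbb{N}_+$ and $f:[0,1]\to\mathbb{R}$, $\widetilde{B}_n(f)(x):=\sum_{k=0}^n \left[f\left(\frac{k}{n}\right)\binom{n}{k}\right]x^k(1-x)^{n-k}$, where $[\alpha]$ is the largest integer $\le\alpha$. Monotone decreasing is meant in the non-strict sense. *)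

theory Defs
  imports Complex_Main
begin

definition Btilde :: "nat \<Rightarrow> (real \<Rightarrow> real) \<Rightarrow> real \<Rightarrow> real" where
  "Btilde n f x = (\<Sum>k=0..n. of_int \<lfloor>f (real k / real n) * real (n choose k)\<rfloor>
                       * x ^ k * (1 - x) ^ (n - k))"

end

theory Submission
  imports Defs "HOL-Analysis.Weierstrass_Theorems"
begin

text \<open>\<open>Btilde n f\<close> is the Bernstein polynomial with coefficients
  \<open>a\<^sub>k = \<lfloor>f(k/n) C(n,k)\<rfloor> / C(n,k)\<close>, and a Bernstein polynomial with decreasing coefficients is
  decreasing on \<open>[0,1]\<close> (induction on the degree via the de Casteljau recursion). Since
  \<open>f(k/n) - 1/C(n,k) < a\<^sub>k \<le> f(k/n)\<close>, the coefficients do decrease: at the two ends because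
  \<open>f(0)\<close> and \<open>f(1)\<close> are integers and are therefore not changed by the rounding, and in the middle
  because the increments of \<open>\<psi>\<close> force \<open>f\<close> to drop by at least \<open>1/C(n,k)\<close> from one grid point
  to the next, which absorbs the rounding error.\<close>

lemma Bernstein_Suc_0: "Bernstein (Suc n) 0 x = (1 - x) * Bernstein n 0 x"
  by (simp add: Bernstein_def)

lemma Bernstein_Suc_Suc:
  "Bernstein (Suc n) (Suc k) x = (1 - x) * Bernstein n (Suc k) x + x * Bernstein n k x"
proof (cases "k < n")
  case True
  then have "n - k = Suc (n - Suc k)"
    by simp
  then show ?thesis
    by (simp add: Bernstein_def algebra_simps)
next
  case False
  then show ?thesis
    by (cases "k = n") (simp_all add: Bernstein_def binomial_eq_0)
qed

definition Bernstein_poly :: "(nat \<Rightarrow> real) \<Rightarrow> nat \<Rightarrow> real \<Rightarrow> real" where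
  "Bernstein_poly a n x = (\<Sum>k\<le>n. a k * Bernstein n k x)"

lemma Bernstein_poly_Suc:
  "Bernstein_poly a (Suc n) x = (1 - x) * Bernstein_poly a n x + x * Bernstein_poly (a \<circ> Suc) n x"
proof -
  have "Bernstein_poly a n x = (\<Sum>k\<le>Suc n. a k * Bernstein n k x)"
    by (simp add: Bernstein_poly_def Bernstein_def)
  also have "\<dots> = a 0 * Bernstein n 0 x + (\<Sum>k\<le>n. a (Suc k) * Bernstein n (Suc k) x)"
    by (subst sum.atMost_Suc_shift) simp
  finally have "(1 - x) * Bernstein_poly a n x
     = a 0 * Bernstein (Suc n) 0 x + (\<Sum>k\<le>n. a (Suc k) * ((1 - x) * Bernstein n (Suc k) x))"
    by (simp add: Bernstein_Suc_0 sum_distrib_left algebra_simps)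
  moreover have "x * Bernstein_poly (a \<circ> Suc) n x = (\<Sum>k\<le>n. a (Suc k) * (x * Bernstein n k x))"
    by (simp add: Bernstein_poly_def sum_distrib_left algebra_simps)
  ultimately show ?thesis
    unfolding Bernstein_poly_def sum.atMost_Suc_shift[of _ "n"]
    by (simp add: Bernstein_Suc_Suc distrib_left sum.distrib)
qed

lemma Bernstein_poly_0 [simp]: "Bernstein_poly a 0 x = a 0"
  by (simp add: Bernstein_poly_def Bernstein_def)

lemma Bernstein_poly_mono:
  assumes "\<And>k. k \<le> n \<Longrightarrow> b k \<le> a k" and "0 \<le> x" and "x \<le> 1"
  shows "Bernstein_poly b n x \<le> Bernstein_poly a n x"
  unfolding Bernstein_poly_def
  using assms by (intro sum_mono mult_right_mono Bernstein_nonneg) auto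

lemma antimono_on_Bernstein_poly:
  assumes "\<And>k. k < n \<Longrightarrow> a (Suc k) \<le> a k"
  shows "antimono_on {0..1} (Bernstein_poly a n)"
  using assms
proof (induction n arbitrary: a)
  case 0
  then show ?case
    by (simp add: monotone_on_def)
next
  case (Suc n)
  let ?P = "Bernstein_poly a n" and ?Q = "Bernstein_poly (a \<circ> Suc) n"
  have P: "antimono_on {0..1} ?P" and Q: "antimono_on {0..1} ?Q"
    using Suc by auto
  show ?case
  proof (rule monotone_onI)
    fix x y :: real
    assume x: "x \<in> {0..1}" and y: "y \<in> {0..1}" and "x \<le> y"
    have QP: "?Q x \<le> ?P x"
      using Suc.prems x by (intro Bernstein_poly_mono) auto
    have "Bernstein_poly a (Suc n) y = (1 - y) * ?P y + y * ?Q y"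
      by (rule Bernstein_poly_Suc)
    also have "\<dots> \<le> (1 - y) * ?P x + y * ?Q x"
      using monotone_onD[OF P x y] monotone_onD[OF Q x y] \<open>x \<le> y\<close> y
      by (intro add_mono mult_left_mono) auto
    also have "\<dots> = ?P x - y * (?P x - ?Q x)"
      by (simp add: algebra_simps)
    also have "\<dots> \<le> ?P x - x * (?P x - ?Q x)"
      using QP \<open>x \<le> y\<close> by (intro diff_left_mono mult_right_mono) auto
    also have "\<dots> = Bernstein_poly a (Suc n) x"
      by (simp add: Bernstein_poly_Suc algebra_simps)
    finally show "Bernstein_poly a (Suc n) y \<le> Bernstein_poly a (Suc n) x" .
  qed
qed

lemma floor_mult_divide_le:
  fixes y c :: real
  assumes "0 < c"
  shows "of_int \<lfloor>y * c\<rfloor> / c \<le> y"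
  using assms by (simp add: divide_le_eq)

lemma floor_mult_divide_gt:
  fixes y c :: real
  assumes "0 < c"
  shows "y - 1 / c < of_int \<lfloor>y * c\<rfloor> / c"
proof -
  have "y - 1 / c = (y * c - 1) / c"
    using assms by (simp add: field_simps)
  also have "\<dots> < of_int \<lfloor>y * c\<rfloor> / c"
    using assms by (intro divide_strict_right_mono) linarith+
  finally show ?thesis .
qed

lemma Ints_le_floor_mult_divide:
  fixes y c m :: real
  assumes "0 < c" and "c \<in> \<int>" and "m \<in> \<int>" and "m \<le> y"
  shows "m \<le> of_int \<lfloor>y * c\<rfloor> / c"
proof -
  obtain i j where "m = of_int i" "c = of_int j"
    using assms(2,3) by (auto elim!: Ints_cases)
  moreover have "m * c \<le> y * c"
    using assms by (simp add: mult_right_mono)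
  ultimately have "m * c \<le> of_int \<lfloor>y * c\<rfloor>"
    by (metis of_int_mult le_floor_iff of_int_le_iff)
  then show ?thesis
    using assms(1) by (simp add: le_divide_eq)
qed

definition rounded_coeff :: "(real \<Rightarrow> real) \<Rightarrow> nat \<Rightarrow> nat \<Rightarrow> real" where
  "rounded_coeff f n k =
     of_int \<lfloor>f (real k / real n) * real (n choose k)\<rfloor> / real (n choose k)"

lemma Btilde_eq_Bernstein_poly: "Btilde n f = Bernstein_poly (rounded_coeff f n) n"
  unfolding Btilde_def Bernstein_poly_def Bernstein_def rounded_coeff_def atLeast0AtMost
  by (intro ext sum.cong) auto

lemma rounded_coeff_le: "k \<le> n \<Longrightarrow> rounded_coeff f n k \<le> f (real k / real n)"
  unfolding rounded_coeff_def by (simp add: floor_mult_divide_le)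

lemma rounded_coeff_gt:
  "k \<le> n \<Longrightarrow> f (real k / real n) - 1 / real (n choose k) < rounded_coeff f n k"
  unfolding rounded_coeff_def by (simp add: floor_mult_divide_gt)

lemma Ints_le_rounded_coeff:
  "k \<le> n \<Longrightarrow> m \<in> \<int> \<Longrightarrow> m \<le> f (real k / real n) \<Longrightarrow> m \<le> rounded_coeff f n k"
  unfolding rounded_coeff_def by (simp add: Ints_le_floor_mult_divide)

lemma rounded_coeff_Ints:
  "k \<le> n \<Longrightarrow> f (real k / real n) \<in> \<int> \<Longrightarrow> rounded_coeff f n k = f (real k / real n)"
  by (simp add: Ints_le_rounded_coeff order_antisym rounded_coeff_le)

lemma rounded_coeff_Suc_le_of_Ints:
  assumes "k < n" and "f (real (Suc k) / real n) \<le> f (real k / real n)"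
    and "f (real k / real n) \<in> \<int> \<or> f (real (Suc k) / real n) \<in> \<int>"
  shows "rounded_coeff f n (Suc k) \<le> rounded_coeff f n k"
  using assms(3)
proof
  assume "f (real k / real n) \<in> \<int>"
  then show ?thesis
    using assms(1,2) rounded_coeff_le[of "Suc k" n f] rounded_coeff_Ints[of k n f] by simp
next
  assume "f (real (Suc k) / real n) \<in> \<int>"
  then show ?thesis
    using assms(1,2) rounded_coeff_Ints[of "Suc k" n f] Ints_le_rounded_coeff[of k n] by simp
qed

lemma rounded_coeff_Suc_le_of_gap:
  assumes "k < n" and "f (real (Suc k) / real n) + 1 / real (n choose k) \<le> f (real k / real n)"
  shows "rounded_coeff f n (Suc k) \<le> rounded_coeff f n k"
  using assms rounded_coeff_le[of "Suc k" n f] rounded_coeff_gt[of k n f] by simp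

lemma inner_grid_point:
  assumes "1 \<le> k" and "k + 1 \<le> n"
  shows "real k / real n \<in> {1 / real n..1 - 1 / real n}"
  using assms by (auto simp: field_simps)

theorem proposition2p6:
  fixes f psi :: "real \<Rightarrow> real" and n :: nat
  assumes "f 0 \<in> \<int>" and "f 1 \<in> \<int>"
    and "n \<ge> 1"
    and "n \<ge> 3 \<Longrightarrow> \<forall>k\<in>{1..n-2}.
           psi (real (k+1) / real n) - psi (real k / real n) \<ge> 1 / real (n choose k)"
    and "antimono_on {0..1 / real n} f"
    and "antimono_on {1 - 1 / real n..1} f"
    and "n \<ge> 3 \<Longrightarrow> antimono_on {1 / real n..1 - 1 / real n} (\<lambda>x. f x + psi x)"
  shows "antimono_on {0..1} (Btilde n f)"
  unfolding Btilde_eq_Bernstein_poly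
proof (rule antimono_on_Bernstein_poly)
  fix k
  assume "k < n"
  then consider "k = 0" | "1 \<le> k" "Suc k = n" | "1 \<le> k" "Suc k < n"
    by linarith
  then show "rounded_coeff f n (Suc k) \<le> rounded_coeff f n k"
  proof cases
    case 1
    then show ?thesis
      using assms(1,3) monotone_onD[OF assms(5), of 0 "1 / real n"]
      by (intro rounded_coeff_Suc_le_of_Ints) auto
  next
    case 2
    then have "real k / real n = 1 - 1 / real n"
      using assms(3) by (simp add: field_simps)
    then show ?thesis
      using 2 assms(2,3) monotone_onD[OF assms(6), of "real k / real n" 1]
      by (intro rounded_coeff_Suc_le_of_Ints) auto
  next
    case 3
    then have "n \<ge> 3" and "k \<in> {1..n-2}"
      by auto
    then have "1 / real (n choose k) \<le> psi (real (Suc k) / real n) - psi (real k / real n)"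
      using assms(4) by auto
    then show ?thesis
      using 3 \<open>n \<ge> 3\<close> inner_grid_point[of k n] inner_grid_point[of "Suc k" n]
        monotone_onD[OF assms(7), of "real k / real n" "real (Suc k) / real n"]
      by (intro rounded_coeff_Suc_le_of_gap) (auto simp: divide_right_mono)
  qed
qed

end
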